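(* Let $\Phi$ be a unit norm tight frame in $\mathbb{R}^d$ with $K$ atoms, frame constant $K/d$ and coherence $\mu$, and let $1\le S\le K$. Let $x$ be drawn from a symmetric probability distribution $\nu$ on $S^{K-1}$ and let $y=\Phi x$. Suppose there exists $\kappa>0$ such that $$\nu\Big(\min_{p,\sigma}\Big(\|P_{I_p}(\Phi)\Phi c_{p,\sigma}(x)\|_2-\max_{|I|\le S,\ I\neq I_p}\|P_I(\Phi)\Phi c_{p,\sigma}(x)\|_2\Big)\ge2\kappa\Big)=1,$$ where $I_p:=p^{-1}(\{1,\dots,S\})$ and the minimum is over all permutations $p$ and sign sequences $\sigma$. Then $\Phi$ is a local maximum of $\max_{\Psi\in\mathcal D}\mathbb{E}_y\big(\max_{|I|\le S}\|P_I(\Psi)y\|_2^2\big)$.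
   Context: $\mathcal D$ is the set of dictionaries $\Psi=(\psi_1,\dots,\psi_K)$, $\psi_i\in\mathbb{R}^d$, $\|\psi_i\|_2=1$; $P_I(\Psi)=\Psi_I\Psi_I^\dagger$ is the orthogonal projection onto the span of $(\psi_i)_{i\in I}$. A probability measure on $S^{K-1}$ is symmetric if invariant under coordinate sign flips and coordinate permutations. For $x\in S^{K-1}$, $c(x)=(c_1(x),\dots,c_K(x))$ is the non-increasing rearrangement of $(|x_1|,\dots,|x_K|)$, and $c_{p,\sigma}(x)(i)=\sigma_ic_{p(i)}(x)$. Unit norm tight frame: $\sum_i|\langle\phi_i,v\rangle|^2=(K/d)\|v\|_2^2$; coherence $\mu=\max_{i\ne j}|\langle\phi_i,\phi_j\rangle|$. *)

theory Defs
  imports "HOL-Analysis.Analysis" "HOL-Probability.Probability" "HOL-Library.Multiset"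
begin

text \<open>A dictionary with K atoms in R^d is a vector of K columns, Psi $ i = psi_i.\<close>

definition dictionaries :: "(real^'d^'k) set" where
  "dictionaries = {Psi. \<forall>i. norm (Psi $ i) = 1}"

definition orth_proj :: "('a::euclidean_space) set \<Rightarrow> 'a \<Rightarrow> 'a" where
  "orth_proj V y = (THE v. v \<in> V \<and> (\<forall>w\<in>V. inner (y - v) w = 0))"

definition P :: "'k set \<Rightarrow> real^'d^'k \<Rightarrow> real^'d \<Rightarrow> real^'d" where
  "P I Psi y = orth_proj (span ((\<lambda>i. Psi $ i) ` I)) y"

definition synth :: "real^'d^'k \<Rightarrow> real^'k \<Rightarrow> real^'d" where
  "synth Psi x = (\<Sum>i\<in>UNIV. (x $ i) *\<^sub>R (Psi $ i))"

text \<open>Non-increasing rearrangement of absolute values, 0-indexed: c x j is the (j+1)-th largest |x_i|.\<close>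
definition crearr :: "real^'k \<Rightarrow> nat \<Rightarrow> real" where
  "crearr x j = rev (sorted_list_of_multiset (image_mset (\<lambda>i. \<bar>x $ i\<bar>) (mset_set UNIV))) ! j"

definition cps :: "('k::finite \<Rightarrow> nat) \<Rightarrow> ('k \<Rightarrow> real) \<Rightarrow> real^'k \<Rightarrow> real^'k" where
  "cps p \<sigma> x = (\<chi> i. \<sigma> i * crearr x (p i))"

definition perms :: "('k::finite \<Rightarrow> nat) set" where
  "perms = {p. bij_betw p UNIV {0..<CARD('k)}}"

definition signs :: "('k \<Rightarrow> real) set" where
  "signs = {\<sigma>. \<forall>i. \<sigma> i \<in> {-1, 1}}"

definition unit_sphere :: "('a::real_normed_vector) set" where
  "unit_sphere = {x. norm x = 1}"

definition symmetric_measure :: "(real^'k::finite) measure \<Rightarrow> bool" where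
  "symmetric_measure \<nu> \<longleftrightarrow>
     prob_space \<nu> \<and> sets \<nu> = sets borel \<and> emeasure \<nu> unit_sphere = 1 \<and>
     (\<forall>\<sigma> \<in> signs. \<forall>q. bij (q :: 'k \<Rightarrow> 'k) \<longrightarrow>
        distr \<nu> borel (\<lambda>x. \<chi> i. \<sigma> i * x $ q i) = \<nu>)"

definition unit_norm_tight_frame :: "real^'d^'k \<Rightarrow> bool" where
  "unit_norm_tight_frame Phi \<longleftrightarrow>
     (\<forall>i. norm (Phi $ i) = 1) \<and>
     (\<forall>v. (\<Sum>i\<in>UNIV. (inner (Phi $ i) v)\<^sup>2) = (real CARD('k) / real CARD('d)) * (norm v)\<^sup>2)"

definition coherence :: "real^'d^'k \<Rightarrow> real" where
  "coherence Phi = Max {\<bar>inner (Phi $ i) (Phi $ j)\<bar> | i j. i \<noteq> j}"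

definition objective :: "(real^'k) measure \<Rightarrow> real^'d^'k \<Rightarrow> nat \<Rightarrow> real^'d^'k \<Rightarrow> real" where
  "objective \<nu> Phi S Psi =
     (\<integral>x. Max {(norm (P I Psi (synth Phi x)))\<^sup>2 | I. card I \<le> S} \<partial>\<nu>)"

definition local_max_on :: "'a::metric_space set \<Rightarrow> ('a \<Rightarrow> real) \<Rightarrow> 'a \<Rightarrow> bool" where
  "local_max_on A f a \<longleftrightarrow> a \<in> A \<and> (\<exists>\<epsilon>>0. \<forall>b\<in>A. dist b a < \<epsilon> \<longrightarrow> f b \<le> f a)"

end

theory Submission
  imports Defs
begin

text \<open>
  The margin hypothesis pins down, for almost every \<open>x\<close>, a support \<open>J\<close> of size \<open>S\<close>
  (the positions of the \<open>S\<close> largest \<open>\<bar>x\<^sub>i\<bar>\<close>) whose projection beats every other support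
  of size at most \<open>S\<close> by \<open>2\<kappa>\<close>; applied with a linearly dependent \<open>\<Phi>\<^sub>J\<close> it would fail,
  so every \<open>S\<close> atoms of \<open>\<Phi>\<close> are linearly independent. The synthesis map is then uniformly
  injective on \<open>S\<close>-sparse vectors, projections onto spans of \<open>S\<close> atoms move continuously
  with the dictionary, and for \<open>\<Psi>\<close> near \<open>\<Phi>\<close> the same support \<open>J\<close> still attains the
  maximum. The objective at \<open>\<Psi>\<close> therefore equals
  \<open>\<Sum>\<^sub>J E(1\<^bsub>top J\<^esub>(x) \<parallel>P\<^sub>J(\<Psi>) \<Phi> x\<parallel>\<^sup>2)\<close>; sign symmetry of \<open>\<nu>\<close> kills the cross terms
  \<open>x\<^sub>i x\<^sub>j\<close>, and permutation symmetry makes the remaining weights equal to some \<open>m\<close> on \<open>J\<close>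
  and \<open>n \<le> m\<close> off \<open>J\<close>. Tightness gives \<open>\<Sum>\<^sub>i \<parallel>P\<^sub>J(\<Psi>) \<phi>\<^sub>i\<parallel>\<^sup>2 = (K/d) rank \<le> (K/d) S\<close>, with
  equality at \<open>\<Phi>\<close>, and \<open>\<parallel>P\<^sub>J(\<Psi>) \<phi>\<^sub>i\<parallel> \<le> 1 = \<parallel>P\<^sub>J(\<Phi>) \<phi>\<^sub>i\<parallel>\<close> for \<open>i \<in> J\<close>.
\<close>

section \<open>Orthogonal projections\<close>

lemma orth_proj_ex1:
  fixes V :: "'a::euclidean_space set"
  assumes "subspace V"
  shows "\<exists>!v. v \<in> V \<and> (\<forall>w\<in>V. inner (y - v) w = 0)"
proof -
  obtain a z where a: "a \<in> span V" and z: "\<And>w. w \<in> span V \<Longrightarrow> orthogonal z w"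
    and y: "y = a + z"
    using orthogonal_subspace_decomp_exists by blast
  have sV: "span V = V" using assms by simp
  have a_ok: "a \<in> V \<and> (\<forall>w\<in>V. inner (y - a) w = 0)"
    using a z y by (auto simp: orthogonal_def sV)
  show ?thesis
  proof (rule ex1I[of _ a])
    fix v assume v: "v \<in> V \<and> (\<forall>w\<in>V. inner (y - v) w = 0)"
    have "v - a \<in> V" using v a_ok assms subspace_diff by blast
    then have "inner (y - v) (v - a) = 0" "inner (y - a) (v - a) = 0" using v a_ok by auto
    then have "inner (v - a) (v - a) = 0" by (simp add: inner_diff_left inner_diff_right)
    then show "v = a" by simp
  qed (fact a_ok)
qed

lemma orth_proj_in: "subspace V \<Longrightarrow> orth_proj V y \<in> V"
  and orth_proj_orthogonal: "subspace V \<Longrightarrow> w \<in> V \<Longrightarrow> inner (y - orth_proj V y) w = 0"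
  using theI'[OF orth_proj_ex1, of V y] unfolding orth_proj_def by blast+

lemma orth_proj_eqI:
  fixes V :: "'a::euclidean_space set"
  assumes "subspace V" "v \<in> V" "\<And>w. w \<in> V \<Longrightarrow> inner (y - v) w = 0"
  shows "orth_proj V y = v"
  using orth_proj_ex1[OF assms(1), of y] orth_proj_in[OF assms(1)]
    orth_proj_orthogonal[OF assms(1)] assms by blast

lemma orth_proj_id: "subspace V \<Longrightarrow> v \<in> V \<Longrightarrow> orth_proj V v = v"
  by (rule orth_proj_eqI) auto

lemma linear_orth_proj:
  fixes V :: "'a::euclidean_space set"
  assumes V: "subspace V"
  shows "linear (orth_proj V)"
proof (rule linearI)
  fix x y
  have "inner (x + y - (orth_proj V x + orth_proj V y)) w = 0" if "w \<in> V" for w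
    using orth_proj_orthogonal[OF V that, of x] orth_proj_orthogonal[OF V that, of y]
    by (simp add: algebra_simps inner_diff_left)
  then show "orth_proj V (x + y) = orth_proj V x + orth_proj V y"
    by (intro orth_proj_eqI[OF V] subspace_add[OF V] orth_proj_in[OF V])
next
  fix c x
  have "inner (c *\<^sub>R x - c *\<^sub>R orth_proj V x) w = 0" if "w \<in> V" for w
    using orth_proj_orthogonal[OF V that, of x] by (simp add: inner_diff_left)
  then show "orth_proj V (c *\<^sub>R x) = c *\<^sub>R orth_proj V x"
    by (intro orth_proj_eqI[OF V] subspace_scale[OF V] orth_proj_in[OF V])
qed

lemma orth_proj_pythagoras:
  fixes V :: "'a::euclidean_space set"
  assumes V: "subspace V"
  shows "(norm y)\<^sup>2 = (norm (orth_proj V y))\<^sup>2 + (norm (y - orth_proj V y))\<^sup>2"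
proof -
  let ?p = "orth_proj V y"
  have "inner (y - ?p) ?p = 0" by (rule orth_proj_orthogonal[OF V orth_proj_in[OF V]])
  then show ?thesis
    using norm_add_Pythagorean[of ?p "y - ?p"] by (simp add: orthogonal_def inner_commute)
qed

lemma norm_orth_proj_le:
  fixes V :: "'a::euclidean_space set"
  assumes "subspace V"
  shows "norm (orth_proj V y) \<le> norm y"
proof (rule power2_le_imp_le)
  show "(norm (orth_proj V y))\<^sup>2 \<le> (norm y)\<^sup>2" using orth_proj_pythagoras[OF assms, of y] by simp
qed simp

lemma orth_proj_best_approx:
  fixes V :: "'a::euclidean_space set"
  assumes V: "subspace V" and v: "v \<in> V"
  shows "norm (y - orth_proj V y) \<le> norm (y - v)"
proof -
  let ?p = "orth_proj V y"
  have "?p - v \<in> V" using orth_proj_in[OF V] v V subspace_diff by blast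
  then have "inner (y - ?p) (?p - v) = 0" by (rule orth_proj_orthogonal[OF V])
  then have "(norm (y - v))\<^sup>2 = (norm (y - ?p))\<^sup>2 + (norm (?p - v))\<^sup>2"
    using norm_add_Pythagorean[of "y - ?p" "?p - v"] by (simp add: orthogonal_def)
  then have "(norm (y - ?p))\<^sup>2 \<le> (norm (y - v))\<^sup>2" by simp
  then show ?thesis by (rule power2_le_imp_le) simp
qed

lemma norm_orth_proj_orthonormal_basis:
  fixes V :: "'a::euclidean_space set"
  assumes V: "subspace V" and B: "finite B" "span B = V" "pairwise orthogonal B"
    "\<And>b. b \<in> B \<Longrightarrow> norm b = 1"
  shows "(norm (orth_proj V y))\<^sup>2 = (\<Sum>b\<in>B. (inner y b)\<^sup>2)"
proof -
  define u where "u = (\<Sum>b\<in>B. inner y b *\<^sub>R b)"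
  have uV: "u \<in> V" unfolding u_def using B span_superset
    by (intro subspace_sum[OF V] subspace_scale[OF V]) blast
  have "inner u b' = inner y b'" if b': "b' \<in> B" for b'
  proof -
    have "inner u b' = (\<Sum>b\<in>B. inner y b * inner b b')"
      unfolding u_def by (simp add: inner_sum_left)
    also have "\<dots> = inner y b' * inner b' b'"
      using B(1,3) b' by (subst sum.remove[of _ b']) (auto simp: pairwise_def orthogonal_def)
    finally show ?thesis using B(4)[OF b'] by (simp add: dot_square_norm)
  qed
  then have "span B \<subseteq> {w. inner (y - u) w = 0}"
    by (intro span_minimal) (auto simp: subspace_def inner_add_right inner_diff_left)
  then have u: "orth_proj V y = u" using B(2) by (intro orth_proj_eqI[OF V uV]) auto
  have "(norm u)\<^sup>2 = inner y u"
    using orth_proj_orthogonal[OF V uV, of y] by (simp add: u dot_square_norm inner_diff_left)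
  also have "\<dots> = (\<Sum>b\<in>B. (inner y b)\<^sup>2)"
    unfolding u_def by (simp add: inner_sum_right power2_eq_square)
  finally show ?thesis using u by simp
qed

lemma sum_norm_orth_proj_tight_frame:
  fixes Phi :: "real^'d^'k" and V :: "(real^'d) set"
  assumes T: "unit_norm_tight_frame Phi" and V: "subspace V"
  shows "(\<Sum>i\<in>UNIV. (norm (orth_proj V (Phi $ i)))\<^sup>2) = real CARD('k) / real CARD('d) * dim V"
proof -
  obtain B where B: "B \<subseteq> V" "pairwise orthogonal B" "\<And>x. x \<in> B \<Longrightarrow> norm x = 1"
    "independent B" "card B = dim V" "span B = V"
    using orthonormal_basis_subspace[OF V] by blast
  have fB: "finite B" using B(4) finiteI_independent by blast
  have "(\<Sum>i\<in>UNIV. (norm (orth_proj V (Phi $ i)))\<^sup>2) = (\<Sum>i\<in>UNIV. \<Sum>b\<in>B. (inner (Phi $ i) b)\<^sup>2)"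
    using norm_orth_proj_orthonormal_basis[OF V fB B(6,2,3)] by simp
  also have "\<dots> = (\<Sum>b\<in>B. \<Sum>i\<in>UNIV. (inner (Phi $ i) b)\<^sup>2)" by (rule sum.swap)
  also have "\<dots> = (\<Sum>b\<in>B. real CARD('k) / real CARD('d))"
    using T B(3) unfolding unit_norm_tight_frame_def by simp
  finally show ?thesis using B(5) by simp
qed

section \<open>Synthesis of sparse vectors\<close>

definition supported_on :: "'k set \<Rightarrow> real^'k \<Rightarrow> bool" where
  "supported_on I b \<longleftrightarrow> (\<forall>i. i \<notin> I \<longrightarrow> b $ i = 0)"

definition l1_norm :: "real^'k \<Rightarrow> real" where
  "l1_norm b = (\<Sum>i\<in>UNIV. \<bar>b $ i\<bar>)"

definition atoms_independent :: "real^'d^'k \<Rightarrow> 'k set \<Rightarrow> bool" where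
  "atoms_independent Phi I \<longleftrightarrow> (\<forall>b. supported_on I b \<and> synth Phi b = 0 \<longrightarrow> b = 0)"

lemma linear_synth: "linear (synth Psi)"
  unfolding synth_def by (rule linearI) (auto simp: sum.distrib scaleR_add_left scaleR_sum_right)

lemma synth_axis: "synth Psi (axis i 1) = Psi $ i"
proof -
  have "synth Psi (axis i 1) = (\<Sum>j\<in>UNIV. if j = i then Psi $ i else 0)"
    unfolding synth_def by (intro sum.cong) (auto simp: axis_def)
  then show ?thesis by simp
qed

lemma synth_in_span_atoms:
  assumes "supported_on I b"
  shows "synth Psi b \<in> span ((\<lambda>i. Psi $ i) ` I)"
  unfolding synth_def
proof (rule span_sum)
  fix i
  show "b $ i *\<^sub>R Psi $ i \<in> span ((\<lambda>i. Psi $ i) ` I)"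
    using assms by (cases "i \<in> I") (auto simp: supported_on_def span_zero intro: span_scale span_base)
qed

lemma span_atoms_imp_synth:
  fixes Psi :: "real^'d^'k"
  assumes "y \<in> span ((\<lambda>i. Psi $ i) ` I)"
  shows "\<exists>b. supported_on I b \<and> y = synth Psi b"
proof -
  let ?W = "synth Psi ` {b. supported_on I b}"
  have "subspace {b::real^'k. supported_on I b}"
    by (auto simp: subspace_def supported_on_def)
  then have "subspace ?W" by (rule linear_subspace_image[OF linear_synth])
  moreover have "(\<lambda>i. Psi $ i) ` I \<subseteq> ?W"
  proof
    fix v assume "v \<in> (\<lambda>i. Psi $ i) ` I"
    then obtain i where "i \<in> I" "v = synth Psi (axis i 1)" by (auto simp: synth_axis)
    then show "v \<in> ?W" by (auto simp: supported_on_def axis_def)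
  qed
  ultimately have "span ((\<lambda>i. Psi $ i) ` I) \<subseteq> ?W" by (rule span_minimal[rotated])
  then show ?thesis using assms by blast
qed

lemma l1_norm_nonneg: "0 \<le> l1_norm b"
  unfolding l1_norm_def by (simp add: sum_nonneg)

lemma l1_norm_le: "l1_norm (b::real^'k) \<le> CARD('k) * norm b"
proof -
  have "l1_norm b \<le> (\<Sum>i\<in>(UNIV::'k set). norm b)"
    unfolding l1_norm_def by (rule sum_mono) (simp add: component_le_norm_cart)
  then show ?thesis by simp
qed

lemma norm_synth_diff_le: "norm (synth Psi b - synth Phi b) \<le> dist Psi Phi * l1_norm b"
proof -
  have "synth Psi b - synth Phi b = (\<Sum>i\<in>UNIV. b $ i *\<^sub>R (Psi $ i - Phi $ i))"
    by (simp add: synth_def sum_subtractf scaleR_diff_right)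
  also have "norm \<dots> \<le> (\<Sum>i\<in>UNIV. \<bar>b $ i\<bar> * norm (Psi $ i - Phi $ i))"
    by (rule order_trans[OF norm_sum]) simp
  also have "\<dots> \<le> (\<Sum>i\<in>UNIV. \<bar>b $ i\<bar> * dist Psi Phi)"
    using Finite_Cartesian_Product.norm_nth_le[of "Psi - Phi"]
    by (intro sum_mono mult_left_mono) (auto simp: dist_norm)
  finally show ?thesis by (simp add: l1_norm_def sum_distrib_left mult.commute)
qed

lemma norm_synth_unit_atoms_le:
  assumes "\<And>i. norm (Phi $ i) = 1"
  shows "norm (synth Phi x) \<le> CARD('k) * norm (x::real^'k)"
proof -
  have "norm (synth Phi x) \<le> (\<Sum>i\<in>UNIV. norm (x $ i *\<^sub>R Phi $ i))"
    unfolding synth_def by (rule norm_sum)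
  also have "\<dots> = l1_norm x" using assms by (simp add: l1_norm_def)
  finally show ?thesis using l1_norm_le[of x] by linarith
qed

lemma atoms_independent_lower_bound:
  fixes Phi :: "real^'d^'k"
  assumes "atoms_independent Phi I"
  obtains c where "c > 0" "\<And>b. supported_on I b \<Longrightarrow> c * l1_norm b \<le> norm (synth Phi b)"
proof -
  have closed: "closed {b::real^'k. supported_on I b}"
  proof -
    have "{b::real^'k. supported_on I b} = (\<Inter>i\<in>-I. {b. b $ i = 0})"
      by (auto simp: supported_on_def)
    moreover have "closed {b::real^'k. b $ i = 0}" for i
      by (rule closed_Collect_eq) (auto intro: continuous_intros)
    ultimately show ?thesis by auto
  qed
  have "subspace {b::real^'k. supported_on I b}" by (auto simp: subspace_def supported_on_def)
  then obtain e where e: "e > 0" "\<forall>b\<in>{b. supported_on I b}. e * norm b \<le> norm (synth Phi b)"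
    using injective_imp_isometric[OF closed _ linear_conv_bounded_linear[THEN iffD1, OF linear_synth]]
      assms unfolding atoms_independent_def by blast
  show ?thesis
  proof (rule that[of "e / CARD('k)"])
    fix b assume "supported_on I b"
    then have "e * norm b \<le> norm (synth Phi b)" using e(2) by blast
    moreover have "e / CARD('k) * l1_norm b \<le> e * norm b"
      using l1_norm_le[of b] e(1) by (simp add: field_simps)
    ultimately show "e / CARD('k) * l1_norm b \<le> norm (synth Phi b)" by linarith
  qed (use e in simp)
qed

lemma atoms_independent_uniform_lower_bound:
  fixes Phi :: "real^'d^'k"
  assumes "\<And>I. card I \<le> S \<Longrightarrow> atoms_independent Phi I"
  obtains c where "c > 0"
    "\<And>I b. card I \<le> S \<Longrightarrow> supported_on I b \<Longrightarrow> c * l1_norm b \<le> norm (synth Phi b)"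
proof -
  let ?J = "{I::'k set. card I \<le> S}"
  have "\<forall>I\<in>?J. \<exists>c>0. \<forall>b. supported_on I b \<longrightarrow> c * l1_norm b \<le> norm (synth Phi b)"
    using assms atoms_independent_lower_bound by (metis mem_Collect_eq)
  then obtain cf where cf: "\<And>I. I \<in> ?J \<Longrightarrow> cf I > 0"
    "\<And>I b. I \<in> ?J \<Longrightarrow> supported_on I b \<Longrightarrow> cf I * l1_norm b \<le> norm (synth Phi b)"
    by (metis bchoice)
  have ne: "cf ` ?J \<noteq> {}" by (auto intro: exI[of _ "{}"])
  show ?thesis
  proof (rule that[of "Min (cf ` ?J)"])
    show "Min (cf ` ?J) > 0" using ne cf(1) by (subst Min_gr_iff) auto
    fix I :: "'k set" and b :: "real^'k" assume I: "card I \<le> S" and b: "supported_on I b"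
    have "Min (cf ` ?J) * l1_norm b \<le> cf I * l1_norm b"
      using I by (intro mult_right_mono Min_le l1_norm_nonneg) auto
    also have "\<dots> \<le> norm (synth Phi b)" using cf(2) I b by simp
    finally show "Min (cf ` ?J) * l1_norm b \<le> norm (synth Phi b)" .
  qed
qed

lemma dim_span_atoms_le: "dim (span ((\<lambda>i. (Psi::real^'d^'k) $ i) ` J)) \<le> card J"
  using dim_le_card'[of "(\<lambda>i. Psi $ i) ` J"] card_image_le[of J "\<lambda>i. Psi $ i"] by simp

lemma dim_span_atoms_eq:
  fixes Phi :: "real^'d^'k"
  assumes ind: "atoms_independent Phi J"
  shows "dim (span ((\<lambda>i. Phi $ i) ` J)) = card J"
proof -
  have inj: "inj_on (\<lambda>i. Phi $ i) J"
  proof (rule inj_onI, rule ccontr)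
    fix i j assume ij: "i \<in> J" "j \<in> J" "Phi $ i = Phi $ j" "i \<noteq> j"
    let ?b = "axis i (1::real) - axis j 1"
    have "supported_on J ?b" using ij by (auto simp: supported_on_def axis_def)
    moreover have "synth Phi ?b = 0" using ij by (simp add: linear_diff[OF linear_synth] synth_axis)
    moreover have "?b \<noteq> 0" using ij by (auto simp: vec_eq_iff axis_def)
    ultimately show False using ind unfolding atoms_independent_def by blast
  qed
  have "independent ((\<lambda>i. Phi $ i) ` J)"
  proof
    assume "dependent ((\<lambda>i. Phi $ i) ` J)"
    then obtain u where u: "\<exists>v\<in>(\<lambda>i. Phi $ i) ` J. u v \<noteq> 0"
      "(\<Sum>v\<in>(\<lambda>i. Phi $ i) ` J. u v *\<^sub>R v) = 0"
      using dependent_finite[of "(\<lambda>i. Phi $ i) ` J"] by auto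
    define b where "b = (\<chi> i. if i \<in> J then u (Phi $ i) else 0)"
    have "synth Phi b = (\<Sum>i\<in>UNIV. if i \<in> J then u (Phi $ i) *\<^sub>R Phi $ i else 0)"
      unfolding synth_def b_def by (intro sum.cong) auto
    also have "\<dots> = (\<Sum>i\<in>J. u (Phi $ i) *\<^sub>R Phi $ i)" by (simp add: sum.If_cases)
    also have "\<dots> = 0" using u(2) by (simp add: sum.reindex[OF inj])
    finally have "synth Phi b = 0" .
    moreover have "supported_on J b" "b \<noteq> 0" using u(1) by (auto simp: supported_on_def b_def vec_eq_iff)
    ultimately show False using ind unfolding atoms_independent_def by blast
  qed
  then have "dim (span ((\<lambda>i. Phi $ i) ` J)) = card ((\<lambda>i. Phi $ i) ` J)"
    by (rule dim_span_eq_card_independent)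
  then show ?thesis using card_image[OF inj] by simp
qed

section \<open>Stability of the maximising support\<close>

definition support_wins :: "real^'d^'k \<Rightarrow> nat \<Rightarrow> real \<Rightarrow> real^'k \<Rightarrow> 'k set \<Rightarrow> bool" where
  "support_wins Phi S \<kappa> x J \<longleftrightarrow> (\<forall>I. card I \<le> S \<longrightarrow> I \<noteq> J \<longrightarrow>
     norm (P I Phi (synth Phi x)) + 2 * \<kappa> \<le> norm (P J Phi (synth Phi x)))"

text \<open>
  The projection of \<open>y\<close> onto \<open>span A\<^sub>I\<close> is \<open>A b\<close> with \<open>\<parallel>b\<parallel>\<^sub>1 \<le> \<parallel>y\<parallel>/c\<close>, so \<open>C b \<in> span C\<^sub>I\<close> lies
  within \<open>\<eta>\<close> of it; comparing residuals by Pythagoras gives the bound.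
\<close>

lemma norm_orth_proj_span_perturb:
  fixes A C :: "real^'d^'k" and y :: "real^'d"
  assumes c: "c > 0" and low: "\<And>b. supported_on I b \<Longrightarrow> c * l1_norm b \<le> norm (synth A b)"
    and eta: "eta = dist A C * norm y / c"
  shows "(norm (orth_proj (span ((\<lambda>i. A $ i) ` I)) y))\<^sup>2 - (2 * norm y * eta + eta\<^sup>2)
    \<le> (norm (orth_proj (span ((\<lambda>i. C $ i) ` I)) y))\<^sup>2"
proof -
  let ?VA = "span ((\<lambda>i. A $ i) ` I)" and ?VC = "span ((\<lambda>i. C $ i) ` I)"
  let ?u = "orth_proj ?VA y"
  have sA: "subspace ?VA" and sC: "subspace ?VC" by auto
  obtain b where b: "supported_on I b" "?u = synth A b"
    using span_atoms_imp_synth orth_proj_in[OF sA] by blast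
  have "c * l1_norm b \<le> norm y"
    using low[OF b(1)] b(2) norm_orth_proj_le[OF sA, of y] by simp
  then have "l1_norm b \<le> norm y / c" using c by (simp add: field_simps)
  then have "dist A C * l1_norm b \<le> dist A C * (norm y / c)" by (rule mult_left_mono) simp
  then have "dist A C * l1_norm b \<le> eta" by (simp add: eta)
  then have uz: "norm (?u - synth C b) \<le> eta"
    using norm_synth_diff_le[of A b C] b(2) by simp
  have eta_nonneg: "eta \<ge> 0" using eta c by simp
  define r where "r = norm (y - ?u)"
  have pyA: "(norm y)\<^sup>2 = (norm ?u)\<^sup>2 + r\<^sup>2" using orth_proj_pythagoras[OF sA, of y] r_def by simp
  then have "r\<^sup>2 \<le> (norm y)\<^sup>2" by simp
  then have r: "r \<le> norm y" by (rule power2_le_imp_le) simp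
  have "norm (y - orth_proj ?VC y) \<le> norm (y - synth C b)"
    by (rule orth_proj_best_approx[OF sC synth_in_span_atoms[OF b(1)]])
  also have "\<dots> \<le> r + eta"
    unfolding r_def using uz norm_triangle_ineq[of "y - ?u" "?u - synth C b"] by simp
  finally have "(norm (y - orth_proj ?VC y))\<^sup>2 \<le> (r + eta)\<^sup>2" by (rule power_mono) simp
  moreover have "(r + eta)\<^sup>2 = r\<^sup>2 + 2 * (r * eta) + eta\<^sup>2" by (simp add: power2_sum)
  moreover have "r * eta \<le> norm y * eta" using r eta_nonneg by (rule mult_right_mono)
  ultimately show ?thesis using pyA orth_proj_pythagoras[OF sC, of y] by linarith
qed

lemma norm_P_perturb:
  fixes Phi Psi :: "real^'d^'k" and y :: "real^'d"
  assumes c: "c > 0" and low: "\<And>b. supported_on I b \<Longrightarrow> c * l1_norm b \<le> norm (synth Phi b)"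
    and d: "dist Psi Phi \<le> c / 2" and y: "norm y \<le> B"
    and eta: "eta = 2 * dist Psi Phi * B / c"
  shows "\<bar>(norm (P I Psi y))\<^sup>2 - (norm (P I Phi y))\<^sup>2\<bar> \<le> 2 * B * eta + eta\<^sup>2"
proof -
  have lowPhi: "c / 2 * l1_norm b \<le> norm (synth Phi b)" if "supported_on I b" for b
  proof -
    have "c / 2 * l1_norm b \<le> c * l1_norm b" using c by (intro mult_right_mono l1_norm_nonneg) auto
    then show ?thesis using low[OF that] by linarith
  qed
  have lowPsi: "c / 2 * l1_norm b \<le> norm (synth Psi b)" if "supported_on I b" for b
    using low[OF that] norm_synth_diff_le[of Psi b Phi] norm_triangle_ineq2[of "synth Phi b" "synth Psi b"]
      mult_right_mono[OF d l1_norm_nonneg, of b]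
    by (simp add: norm_minus_commute)
  define e where "e = 2 * dist Psi Phi * norm y / c"
  have e: "0 \<le> e" "e \<le> eta"
    unfolding e_def eta using c divide_right_mono[OF mult_left_mono[OF y, of "2 * dist Psi Phi"], of c]
    by simp_all
  have "0 \<le> B" using y by (meson norm_ge_zero order_trans)
  then have "2 * norm y * e + e\<^sup>2 \<le> 2 * B * eta + eta\<^sup>2"
    using mult_mono[OF y e(2) _ e(1)] power_mono[OF e(2) e(1), of 2] by linarith
  moreover have "(norm (P I Phi y))\<^sup>2 - (2 * norm y * e + e\<^sup>2) \<le> (norm (P I Psi y))\<^sup>2"
    using norm_orth_proj_span_perturb[of "c / 2" I Phi e Psi y] lowPhi c
    by (simp add: P_def e_def dist_commute)
  moreover have "(norm (P I Psi y))\<^sup>2 - (2 * norm y * e + e\<^sup>2) \<le> (norm (P I Phi y))\<^sup>2"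
    using norm_orth_proj_span_perturb[of "c / 2" I Psi e Phi y] lowPsi c by (simp add: P_def e_def)
  ultimately show ?thesis by linarith
qed

text \<open>A margin of \<open>2\<kappa>\<close> in norms is a margin of \<open>4\<kappa>\<^sup>2\<close> in squared norms, which survives perturbations of size \<open>\<kappa>\<^sup>2\<close>.\<close>

lemma Max_norm_P_eq_if_close:
  fixes Phi Psi :: "real^'d^'k"
  assumes wins: "support_wins Phi S \<kappa> x J" and J: "card J \<le> S" and \<kappa>: "\<kappa> > 0"
    and close: "\<And>I. card I \<le> S \<Longrightarrow>
      \<bar>(norm (P I Psi (synth Phi x)))\<^sup>2 - (norm (P I Phi (synth Phi x)))\<^sup>2\<bar> < \<kappa>\<^sup>2"
  shows "Max {(norm (P I Psi (synth Phi x)))\<^sup>2 | I. card I \<le> S} = (norm (P J Psi (synth Phi x)))\<^sup>2"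
proof -
  let ?y = "synth Phi x"
  have "(norm (P I Psi ?y))\<^sup>2 \<le> (norm (P J Psi ?y))\<^sup>2" if I: "card I \<le> S" for I
  proof (cases "I = J")
    case False
    have "(norm (P I Phi ?y) + 2 * \<kappa>)\<^sup>2 \<le> (norm (P J Phi ?y))\<^sup>2"
      using wins I False \<kappa> unfolding support_wins_def by (intro power_mono) auto
    moreover have "(norm (P I Phi ?y))\<^sup>2 + 4 * \<kappa>\<^sup>2 \<le> (norm (P I Phi ?y) + 2 * \<kappa>)\<^sup>2"
      using \<kappa> by (simp add: power2_eq_square algebra_simps)
    ultimately show ?thesis using close[OF I] close[OF J] by linarith
  qed simp
  then show ?thesis using J by (intro Max_eqI) auto
qed

lemma Max_norm_P_stable:
  fixes Phi :: "real^'d^'k"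
  assumes indep: "\<And>I. card I \<le> S \<Longrightarrow> atoms_independent Phi I" and \<kappa>: "\<kappa> > 0"
    and unit: "\<And>i. norm (Phi $ i) = 1"
  obtains \<epsilon> where "\<epsilon> > 0" "\<And>Psi x J. dist Psi Phi < \<epsilon> \<Longrightarrow> norm x = 1 \<Longrightarrow> card J \<le> S \<Longrightarrow>
     support_wins Phi S \<kappa> x J \<Longrightarrow>
     Max {(norm (P I Psi (synth Phi x)))\<^sup>2 | I. card I \<le> S} = (norm (P J Psi (synth Phi x)))\<^sup>2"
proof -
  obtain c where c: "c > 0"
    and low: "\<And>I b. card I \<le> S \<Longrightarrow> supported_on I b \<Longrightarrow> c * l1_norm b \<le> norm (synth Phi b)"
    using atoms_independent_uniform_lower_bound[OF indep] by blast
  define B where "B = real CARD('k)"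
  define t where "t = min 1 (\<kappa>\<^sup>2 / (2 * B + 1))"
  have B: "B > 0" unfolding B_def by simp
  have "(2 * B + 1) * t \<le> (2 * B + 1) * (\<kappa>\<^sup>2 / (2 * B + 1))"
    using B by (intro mult_left_mono) (auto simp: t_def)
  then have t: "t > 0" "t \<le> 1" "(2 * B + 1) * t \<le> \<kappa>\<^sup>2"
    using \<kappa> B by (auto simp: t_def)
  show ?thesis
  proof (rule that[of "min (c / 2) (c * t / (2 * B))"])
    show "min (c / 2) (c * t / (2 * B)) > 0" using c t B by simp
    fix Psi :: "real^'d^'k" and x :: "real^'k" and J :: "'k set"
    assume d: "dist Psi Phi < min (c / 2) (c * t / (2 * B))" and x: "norm x = 1" and J: "card J \<le> S"
      and wins: "support_wins Phi S \<kappa> x J"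
    define eta where "eta = 2 * dist Psi Phi * B / c"
    have "dist Psi Phi < c * t / (2 * B)" using d by simp
    then have eta: "0 \<le> eta" "eta < t" using c B unfolding eta_def by (simp_all add: field_simps)
    have "eta\<^sup>2 \<le> eta" using eta t(2) by (simp add: power2_eq_square mult_left_le)
    then have "2 * B * eta + eta\<^sup>2 \<le> (2 * B + 1) * eta" by (simp add: algebra_simps)
    also have "\<dots> < (2 * B + 1) * t" using eta B by simp
    finally have small: "2 * B * eta + eta\<^sup>2 < \<kappa>\<^sup>2" using t(3) by simp
    have "\<bar>(norm (P I Psi (synth Phi x)))\<^sup>2 - (norm (P I Phi (synth Phi x)))\<^sup>2\<bar> < \<kappa>\<^sup>2"
      if "card I \<le> S" for I
    proof -
      have "\<bar>(norm (P I Psi (synth Phi x)))\<^sup>2 - (norm (P I Phi (synth Phi x)))\<^sup>2\<bar> \<le> 2 * B * eta + eta\<^sup>2"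
        using d x norm_synth_unit_atoms_le[of Phi x, OF unit]
        by (intro norm_P_perturb[OF c low[OF that]]) (simp_all add: B_def eta_def)
      then show ?thesis using small by linarith
    qed
    then show "Max {(norm (P I Psi (synth Phi x)))\<^sup>2 | I. card I \<le> S} = (norm (P J Psi (synth Phi x)))\<^sup>2"
      by (rule Max_norm_P_eq_if_close[OF wins J \<kappa>])
  qed
qed

section \<open>Rearrangements and the margin condition\<close>

lemma length_crearr_list:
  "length (rev (sorted_list_of_multiset (image_mset (\<lambda>i. \<bar>(x::real^'k) $ i\<bar>) (mset_set UNIV)))) = CARD('k)"
  by (metis length_rev mset_sorted_list_of_multiset size_image_mset size_mset size_mset_set)

lemma crearr_antimono:
  fixes x :: "real^'k"
  assumes "j \<le> j'" "j' < CARD('k)"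
  shows "crearr x j' \<le> crearr x j"
proof -
  let ?s = "sorted_list_of_multiset (image_mset (\<lambda>i. \<bar>x $ i\<bar>) (mset_set (UNIV::'k set)))"
  have len: "length ?s = CARD('k)" using length_crearr_list[of x] by simp
  have "?s ! (length ?s - Suc j') \<le> ?s ! (length ?s - Suc j)"
    by (rule sorted_nth_mono) (use assms len in auto)
  then show ?thesis unfolding crearr_def using assms len by (simp add: rev_nth)
qed

lemma exists_sorting_perm:
  fixes x :: "real^'k"
  obtains p where "p \<in> perms" "\<And>i. crearr x (p i) = \<bar>x $ i\<bar>"
proof -
  let ?g = "\<lambda>i. \<bar>x $ i\<bar>"
  define L where "L = rev (sorted_list_of_multiset (image_mset ?g (mset_set (UNIV::'k set))))"
  obtain e where e: "bij_betw e {0..<CARD('k)} (UNIV::'k set)"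
    using ex_bij_betw_nat_finite[of "UNIV::'k set"] by auto
  define xs where "xs = map (\<lambda>n. ?g (e n)) [0..<CARD('k)]"
  have "mset xs = image_mset ?g (image_mset e (mset_set {0..<CARD('k)}))"
    unfolding xs_def by (simp add: image_mset.compositionality o_def)
  also have "image_mset e (mset_set {0..<CARD('k)}) = mset_set (UNIV::'k set)"
    using e by (simp add: image_mset_mset_set bij_betw_def)
  finally have "mset L = mset xs" unfolding L_def by simp
  then obtain \<pi> where \<pi>: "\<pi> permutes {..<CARD('k)}" "permute_list \<pi> xs = L"
    by (rule mset_eq_permutation) (simp add: xs_def)
  have L_nth: "L ! n = ?g (e (\<pi> n))" if "n < CARD('k)" for n
  proof -
    have "L ! n = xs ! \<pi> n" using \<pi> permute_list_nth[of \<pi> xs n] that by (auto simp: xs_def)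
    moreover have "\<pi> n < CARD('k)" using permutes_in_image[OF \<pi>(1)] that by auto
    ultimately show ?thesis by (simp add: xs_def)
  qed
  have b\<pi>: "bij_betw \<pi> {0..<CARD('k)} {0..<CARD('k)}"
    using permutes_imp_bij[OF \<pi>(1)] by (simp add: lessThan_atLeast0)
  define p where "p = inv_into {0..<CARD('k)} \<pi> \<circ> inv_into {0..<CARD('k)} e"
  have bp: "bij_betw p UNIV {0..<CARD('k)}"
    unfolding p_def by (rule bij_betw_trans[OF bij_betw_inv_into[OF e] bij_betw_inv_into[OF b\<pi>]])
  show ?thesis
  proof (rule that)
    show "p \<in> perms" using bp by (simp add: perms_def)
    fix i
    have "inv_into {0..<CARD('k)} e i \<in> {0..<CARD('k)}"
      using bij_betw_inv_into[OF e] by (auto simp: bij_betw_def)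
    then have "e (\<pi> (p i)) = i"
      unfolding p_def using b\<pi> e by (simp add: bij_betw_inv_into_right)
    moreover have "p i < CARD('k)" using bp by (auto simp: bij_betw_def)
    ultimately show "crearr x (p i) = \<bar>x $ i\<bar>"
      using L_nth unfolding crearr_def L_def[symmetric] by metis
  qed
qed

lemma finite_perms: "finite (perms :: ('k::finite \<Rightarrow> nat) set)"
proof (rule finite_subset)
  show "perms \<subseteq> (\<Pi>\<^sub>E i\<in>(UNIV::'k set). {0..<CARD('k)})"
    by (auto simp: perms_def PiE_UNIV_domain bij_betw_def)
qed (simp add: finite_PiE)

lemma finite_signs: "finite (signs :: ('k::finite \<Rightarrow> real) set)"
proof (rule finite_subset)
  show "signs \<subseteq> (\<Pi>\<^sub>E i\<in>(UNIV::'k set). {-1, 1::real})"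
    by (auto simp: signs_def PiE_UNIV_domain)
qed (simp add: finite_PiE)

definition sign_vector :: "real^'k \<Rightarrow> 'k \<Rightarrow> real" where
  "sign_vector x i = (if x $ i \<ge> 0 then 1 else -1)"

lemma sign_vector_in_signs: "sign_vector x \<in> signs"
  by (simp add: signs_def sign_vector_def)

lemma cps_sorting_perm:
  assumes "\<And>i. crearr x (p i) = \<bar>x $ i\<bar>"
  shows "cps p (sign_vector x) x = x"
  using assms by (auto simp: cps_def sign_vector_def vec_eq_iff)

definition leading_indices :: "nat \<Rightarrow> ('k \<Rightarrow> nat) \<Rightarrow> 'k set" where
  "leading_indices S p = {i. p i < S}"

lemma card_leading_indices:
  assumes "p \<in> perms" "S \<le> CARD('k)"
  shows "card (leading_indices S (p :: 'k::finite \<Rightarrow> nat)) = S"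
proof -
  have b: "bij_betw p UNIV {0..<CARD('k)}" using assms by (simp add: perms_def)
  have "p ` leading_indices S p = {0..<S}"
  proof
    show "{0..<S} \<subseteq> p ` leading_indices S p"
    proof
      fix n assume "n \<in> {0..<S}"
      then have "n \<in> p ` UNIV" using b assms(2) by (auto simp: bij_betw_def)
      then show "n \<in> p ` leading_indices S p" using \<open>n \<in> {0..<S}\<close> by (auto simp: leading_indices_def)
    qed
  qed (auto simp: leading_indices_def)
  moreover have "inj_on p (leading_indices S p)" using b by (auto simp: bij_betw_def inj_on_def)
  ultimately show ?thesis by (metis card_atLeastLessThan card_image diff_zero)
qed

lemma card_eq_obtain_diff:
  fixes I J :: "'a::finite set"
  assumes "card I = card J" "I \<noteq> J"
  obtains i j where "i \<in> I" "i \<notin> J" "j \<in> J" "j \<notin> I"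
proof -
  have "\<not> I \<subseteq> J" using assms card_subset_eq[of J I] by auto
  moreover have "\<not> J \<subseteq> I" using assms card_subset_eq[of I J] by auto
  ultimately show ?thesis using that by blast
qed

lemma exists_perm_leading_indices:
  assumes SK: "S \<le> CARD('k::finite)" and J: "card (J::'k set) = S"
  obtains p where "p \<in> perms" "leading_indices S p = J"
proof -
  define z where "z = (\<chi> i. if i \<in> J then (1::real) else 0)"
  obtain p where p: "p \<in> perms" "\<And>i. crearr z (p i) = \<bar>z $ i\<bar>"
    using exists_sorting_perm[of z] by blast
  have "leading_indices S p = J"
  proof (rule ccontr)
    assume "leading_indices S p \<noteq> J"
    moreover have "card (leading_indices S p) = card J" using card_leading_indices[OF p(1) SK] J by simp
    ultimately obtain i j where "i \<in> leading_indices S p" "i \<notin> J" "j \<in> J" "j \<notin> leading_indices S p"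
      using card_eq_obtain_diff by metis
    moreover have "p j < CARD('k)" using p(1) by (auto simp: perms_def bij_betw_def)
    ultimately have "crearr z (p j) \<le> crearr z (p i)"
      by (intro crearr_antimono) (auto simp: leading_indices_def)
    then show False using p(2) \<open>i \<notin> J\<close> \<open>j \<in> J\<close> by (simp add: z_def)
  qed
  with p(1) that show ?thesis by blast
qed

definition has_margin :: "real^'d^'k \<Rightarrow> nat \<Rightarrow> real \<Rightarrow> real^'k \<Rightarrow> bool" where
  "has_margin Phi S \<kappa> x \<longleftrightarrow>
     (\<forall>p\<in>perms. \<forall>\<sigma>\<in>signs. support_wins Phi S \<kappa> (cps p \<sigma> x) (leading_indices S p))"

lemma has_margin_if_Min_ge:
  fixes Phi :: "real^'d^'k"
  assumes "Min ((\<lambda>(p, \<sigma>).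
               norm (P {i. p i < S} Phi (synth Phi (cps p \<sigma> x)))
             - Max ((\<lambda>I. norm (P I Phi (synth Phi (cps p \<sigma> x))))
                      ` {I. card I \<le> S \<and> I \<noteq> {i. p i < S}}))
             ` (perms \<times> signs)) \<ge> 2 * \<kappa>" (is "Min (?f ` _) \<ge> _")
  shows "has_margin Phi S \<kappa> x"
  unfolding has_margin_def support_wins_def
proof (intro ballI allI impI)
  fix p :: "'k \<Rightarrow> nat" and \<sigma> :: "'k \<Rightarrow> real" and I :: "'k set"
  assume p: "p \<in> perms" and \<sigma>: "\<sigma> \<in> signs" and I: "card I \<le> S" "I \<noteq> leading_indices S p"
  let ?y = "synth Phi (cps p \<sigma> x)"
  have "finite (perms \<times> (signs :: ('k \<Rightarrow> real) set))"
    by (rule finite_cartesian_product[OF finite_perms finite_signs])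
  then have "2 * \<kappa> \<le> ?f (p, \<sigma>)"
    using assms Min_le[OF finite_imageI, of _ "?f (p, \<sigma>)"] p \<sigma> by fastforce
  moreover have "norm (P I Phi ?y) \<le> Max ((\<lambda>I. norm (P I Phi ?y)) ` {I. card I \<le> S \<and> I \<noteq> {i. p i < S}})"
    using I by (intro Max_ge) (auto simp: leading_indices_def)
  ultimately show "norm (P I Phi ?y) + 2 * \<kappa> \<le> norm (P (leading_indices S p) Phi ?y)"
    by (simp add: leading_indices_def)
qed

lemma has_margin_sorting_perm:
  assumes "has_margin Phi S \<kappa> x" "p \<in> perms" "\<And>i. crearr x (p i) = \<bar>x $ i\<bar>"
  shows "support_wins Phi S \<kappa> x (leading_indices S p)"
  using assms(1,2) sign_vector_in_signs[of x] cps_sorting_perm[OF assms(3)]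
  unfolding has_margin_def by metis

text \<open>Two sorting permutations differing on the boundary of the top \<open>S\<close> would each require a strict win.\<close>

lemma has_margin_no_tie:
  fixes Phi :: "real^'d^'k" and x :: "real^'k"
  assumes margin: "has_margin Phi S \<kappa> x" and \<kappa>: "\<kappa> > 0" and SK: "S \<le> CARD('k)"
    and p: "p \<in> perms" "\<And>i. crearr x (p i) = \<bar>x $ i\<bar>" and ij: "p i < S" "\<not> p j < S"
  shows "\<bar>x $ j\<bar> < \<bar>x $ i\<bar>"
proof (rule ccontr)
  assume "\<not> ?thesis"
  moreover have "p j < CARD('k)" using p by (auto simp: perms_def bij_betw_def)
  ultimately have eq: "\<bar>x $ j\<bar> = \<bar>x $ i\<bar>" using crearr_antimono[of "p i" "p j" x] p ij by simp
  define p' where "p' = p \<circ> Transposition.transpose i j"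
  have "p' \<in> perms"
    using p(1) bij_betw_trans[OF bij_transpose[of i j], of p] by (simp add: perms_def p'_def)
  moreover have "crearr x (p' l) = \<bar>x $ l\<bar>" for l
    using p(2)[of l] p(2)[of i] p(2)[of j] eq by (simp add: p'_def Transposition.transpose_def)
  ultimately have p': "p' \<in> perms" "\<And>l. crearr x (p' l) = \<bar>x $ l\<bar>" by blast+
  have "j \<in> leading_indices S p'" "j \<notin> leading_indices S p"
    using ij by (simp_all add: leading_indices_def p'_def)
  then have ne: "leading_indices S p' \<noteq> leading_indices S p" by blast
  have "norm (P (leading_indices S p') Phi (synth Phi x)) + 2 * \<kappa>
      \<le> norm (P (leading_indices S p) Phi (synth Phi x))"
    using has_margin_sorting_perm[OF margin p] ne card_leading_indices[OF p'(1) SK]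
    unfolding support_wins_def by auto
  moreover have "norm (P (leading_indices S p) Phi (synth Phi x)) + 2 * \<kappa>
      \<le> norm (P (leading_indices S p') Phi (synth Phi x))"
    using has_margin_sorting_perm[OF margin p'] ne card_leading_indices[OF p(1) SK]
    unfolding support_wins_def by auto
  ultimately show False using \<kappa> by linarith
qed

definition top_region :: "'k set \<Rightarrow> (real^'k) set" where
  "top_region J = {x. norm x = 1 \<and> (\<forall>i\<in>J. \<forall>j. j \<notin> J \<longrightarrow> \<bar>x $ j\<bar> < \<bar>x $ i\<bar>)}"

lemma top_region_unique:
  fixes I J :: "'k::finite set"
  assumes "card I = card J" "x \<in> top_region I" "x \<in> top_region J"
  shows "I = J"
proof (rule ccontr)
  assume "I \<noteq> J"
  with assms(1) obtain i j where "i \<in> I" "i \<notin> J" "j \<in> J" "j \<notin> I" by (rule card_eq_obtain_diff)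
  then have "\<bar>x $ j\<bar> < \<bar>x $ i\<bar>" "\<bar>x $ i\<bar> < \<bar>x $ j\<bar>"
    using assms(2,3) by (simp_all add: top_region_def)
  then show False by simp
qed

lemma has_margin_top_region:
  fixes Phi :: "real^'d^'k" and x :: "real^'k"
  assumes margin: "has_margin Phi S \<kappa> x" and \<kappa>: "\<kappa> > 0" and SK: "S \<le> CARD('k)" and x: "norm x = 1"
  obtains J where "card J = S" "x \<in> top_region J" "support_wins Phi S \<kappa> x J"
proof -
  obtain p where p: "p \<in> perms" "\<And>i. crearr x (p i) = \<bar>x $ i\<bar>"
    using exists_sorting_perm[of x] by blast
  show ?thesis
  proof (rule that[of "leading_indices S p"])
    show "card (leading_indices S p) = S" by (rule card_leading_indices[OF p(1) SK])
    show "x \<in> top_region (leading_indices S p)"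
      using has_margin_no_tie[OF margin \<kappa> SK p] x by (auto simp: top_region_def leading_indices_def)
  qed (rule has_margin_sorting_perm[OF margin p])
qed

text \<open>
  If \<open>\<phi>\<^sub>i\<close> lay in the span of the other atoms of \<open>J\<close>, then \<open>P\<^sub>J = P\<^sub>J\<^sub>-\<^sub>{\<^sub>i\<^sub>}\<close>, and the margin
  for a permutation with leading indices \<open>J\<close> would compare a projection with itself.
\<close>

lemma has_margin_atoms_independent_card:
  fixes Phi :: "real^'d^'k" and x :: "real^'k"
  assumes margin: "has_margin Phi S \<kappa> x" and \<kappa>: "\<kappa> > 0" and SK: "S \<le> CARD('k)"
    and J: "card J = S"
  shows "atoms_independent Phi J"
  unfolding atoms_independent_def
proof (intro allI impI, rule ccontr)
  fix b assume b: "supported_on J b \<and> synth Phi b = 0" and "b \<noteq> 0"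
  then obtain i where bi: "b $ i \<noteq> 0" by (auto simp: vec_eq_iff)
  then have iJ: "i \<in> J" using b by (auto simp: supported_on_def)
  define b' where "b' = (- (1 / b $ i)) *\<^sub>R (b - b $ i *\<^sub>R axis i 1)"
  have "supported_on (J - {i}) b'" using b by (auto simp: b'_def supported_on_def axis_def)
  moreover have "synth Phi b' = (- (1 / b $ i)) *\<^sub>R (synth Phi b - b $ i *\<^sub>R synth Phi (axis i 1))"
    unfolding b'_def
    by (simp add: linear_scale[OF linear_synth] linear_diff[OF linear_synth] linear_neg[OF linear_synth])
  then have "synth Phi b' = Phi $ i" using b bi by (simp add: synth_axis)
  ultimately have "Phi $ i \<in> span ((\<lambda>l. Phi $ l) ` (J - {i}))"
    using synth_in_span_atoms by metis
  then have "span (insert (Phi $ i) ((\<lambda>l. Phi $ l) ` (J - {i}))) = span ((\<lambda>l. Phi $ l) ` (J - {i}))"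
    by (rule span_redundant)
  moreover have "insert (Phi $ i) ((\<lambda>l. Phi $ l) ` (J - {i})) = (\<lambda>l. Phi $ l) ` J" using iJ by auto
  ultimately have same: "P J Phi = P (J - {i}) Phi" by (simp add: P_def fun_eq_iff)
  obtain p where p: "p \<in> perms" "leading_indices S p = J" by (rule exists_perm_leading_indices[OF SK J])
  have "(\<lambda>_. 1) \<in> signs" by (simp add: signs_def)
  moreover have "card (J - {i}) \<le> S" "J - {i} \<noteq> leading_indices S p" using J iJ p(2) by auto
  ultimately have "norm (P (J - {i}) Phi (synth Phi (cps p (\<lambda>_. 1) x))) + 2 * \<kappa>
       \<le> norm (P J Phi (synth Phi (cps p (\<lambda>_. 1) x)))"
    using margin p unfolding has_margin_def support_wins_def by blast
  then show False using same \<kappa> by simp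
qed

lemma has_margin_atoms_independent:
  fixes Phi :: "real^'d^'k" and x :: "real^'k"
  assumes margin: "has_margin Phi S \<kappa> x" and \<kappa>: "\<kappa> > 0" and SK: "S \<le> CARD('k)"
    and I: "card I \<le> S"
  shows "atoms_independent Phi I"
proof -
  have "S - card I \<le> card (- I)" using SK I by (simp add: Compl_eq_Diff_UNIV card_Diff_subset)
  then obtain T where T: "T \<subseteq> - I" "card T = S - card I" "finite T"
    by (rule obtain_subset_with_card_n)
  have "card (I \<union> T) = S" using T I by (subst card_Un_disjoint) auto
  then have "atoms_independent Phi (I \<union> T)" by (rule has_margin_atoms_independent_card[OF margin \<kappa> SK])
  then show ?thesis unfolding atoms_independent_def supported_on_def by blast
qed

section \<open>Moments of a symmetric measure over the top regions\<close>

lemma symmetric_measureD: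
  fixes \<nu> :: "(real^'k) measure"
  assumes "symmetric_measure \<nu>"
  shows "prob_space \<nu>" "sets \<nu> = sets borel" "space \<nu> = UNIV"
    "measurable \<nu> N = measurable borel N"
  using assms unfolding symmetric_measure_def
  by (auto dest: sets_eq_imp_space_eq intro!: measurable_cong_sets)

lemma AE_symmetric_measure_norm_1:
  fixes \<nu> :: "(real^'k) measure"
  assumes "symmetric_measure \<nu>"
  shows "AE x in \<nu>. norm x = 1"
proof -
  have "measure \<nu> unit_sphere = 1"
    using assms by (simp add: symmetric_measure_def measure_def)
  then have "AE x in \<nu>. x \<in> unit_sphere"
    by (rule prob_space.AE_prob_1[OF symmetric_measureD(1)[OF assms]])
  then show ?thesis by (simp add: unit_sphere_def)
qed

lemma integral_symmetric_measure_invariant: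
  fixes \<nu> :: "(real^'k) measure" and f :: "real^'k \<Rightarrow> real"
  assumes sym: "symmetric_measure \<nu>" and \<sigma>: "\<sigma> \<in> signs" and q: "bij q"
    and f: "f \<in> borel_measurable borel"
  shows "integral\<^sup>L \<nu> f = integral\<^sup>L \<nu> (\<lambda>x. f (\<chi> i. \<sigma> i * x $ q i))"
proof -
  let ?R = "\<lambda>x::real^'k. \<chi> i. \<sigma> i * x $ q i"
  have "linear ?R" by (rule linearI) (auto simp: vec_eq_iff algebra_simps)
  then have "?R \<in> borel_measurable borel"
    by (intro borel_measurable_continuous_onI linear_continuous_on linear_conv_bounded_linear[THEN iffD1])
  then have R: "?R \<in> measurable \<nu> borel" by (simp add: symmetric_measureD(4)[OF sym])
  have "integral\<^sup>L \<nu> f = integral\<^sup>L (distr \<nu> borel ?R) f"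
    using sym \<sigma> q unfolding symmetric_measure_def by simp
  also have "\<dots> = integral\<^sup>L \<nu> (\<lambda>x. f (?R x))" by (rule integral_distr[OF R f])
  finally show ?thesis .
qed

lemma norm_eq_if_abs_components_eq:
  fixes x y :: "real^'k"
  assumes "\<And>l. \<bar>y $ l\<bar> = \<bar>x $ l\<bar>"
  shows "norm y = norm x"
  using assms unfolding norm_vec_def by (simp add: L2_set_def)

lemma norm_permute_components:
  fixes x :: "real^'k"
  assumes "bij q"
  shows "norm (\<chi> l. x $ q l) = norm x"
proof -
  have "(\<Sum>l\<in>UNIV. (x $ q l)\<^sup>2) = (\<Sum>l\<in>UNIV. (x $ l)\<^sup>2)"
    using sum.reindex[of q UNIV "\<lambda>l. (x $ l)\<^sup>2"] assms by (simp add: bij_def)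
  then show ?thesis unfolding norm_vec_def L2_set_def by simp
qed

lemma top_region_abs_cong:
  fixes x y :: "real^'k"
  assumes "\<And>l. \<bar>y $ l\<bar> = \<bar>x $ l\<bar>"
  shows "y \<in> top_region J \<longleftrightarrow> x \<in> top_region J"
  using assms norm_eq_if_abs_components_eq[OF assms] by (simp add: top_region_def)

lemma top_region_permute:
  fixes x :: "real^'k"
  assumes q: "bij q" and J: "\<And>l. q l \<in> J \<longleftrightarrow> l \<in> J"
  shows "(\<chi> l. x $ q l) \<in> top_region J \<longleftrightarrow> x \<in> top_region J"
proof -
  have "(\<forall>i\<in>J. \<forall>j. j \<notin> J \<longrightarrow> \<bar>x $ q j\<bar> < \<bar>x $ q i\<bar>) \<longleftrightarrow>
        (\<forall>i\<in>J. \<forall>j. j \<notin> J \<longrightarrow> \<bar>x $ j\<bar> < \<bar>x $ i\<bar>)"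
  proof
    assume top: "\<forall>i\<in>J. \<forall>j. j \<notin> J \<longrightarrow> \<bar>x $ q j\<bar> < \<bar>x $ q i\<bar>"
    show "\<forall>i\<in>J. \<forall>j. j \<notin> J \<longrightarrow> \<bar>x $ j\<bar> < \<bar>x $ i\<bar>"
    proof (intro ballI allI impI)
      fix i j assume "i \<in> J" "j \<notin> J"
      moreover obtain i' j' where "i = q i'" "j = q j'" using surjD[OF bij_is_surj[OF q]] by metis
      ultimately show "\<bar>x $ j\<bar> < \<bar>x $ i\<bar>" using top J by auto
    qed
  qed (use J in blast)
  then show ?thesis by (simp add: top_region_def norm_permute_components[OF q])
qed

lemma top_region_borel: "top_region J \<in> sets (borel :: (real^'k) measure)"
proof -
  have "top_region J = {x. norm x = 1} \<inter> (\<Inter>i\<in>J. \<Inter>j\<in>-J. {x::real^'k. \<bar>x $ j\<bar> < \<bar>x $ i\<bar>})"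
    by (auto simp: top_region_def)
  moreover have "{x::real^'k. norm x = 1} \<in> sets borel"
    by (rule borel_closed) (rule closed_Collect_eq, auto intro: continuous_intros)
  moreover have "{x::real^'k. \<bar>x $ j\<bar> < \<bar>x $ i\<bar>} \<in> sets borel" for i j
    by (intro borel_open open_Collect_less continuous_intros)
  ultimately show ?thesis by auto
qed

definition top_moment :: "(real^'k) measure \<Rightarrow> 'k set \<Rightarrow> 'k \<Rightarrow> 'k \<Rightarrow> real" where
  "top_moment \<nu> J i j = (\<integral>x. indicator (top_region J) x * (x $ i * x $ j) \<partial>\<nu>)"

lemma borel_measurable_top_moment_integrand:
  "(\<lambda>x::real^'k. indicator (top_region J) x * (x $ i * x $ j)) \<in> borel_measurable borel"
proof -
  have "(\<lambda>x::real^'k. x $ i) \<in> borel_measurable borel" for i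
    by (rule borel_measurable_continuous_onI) (auto intro: continuous_intros)
  then show ?thesis using top_region_borel[of J] by measurable
qed

lemma integrable_top_moment_integrand:
  fixes \<nu> :: "(real^'k) measure"
  assumes sym: "symmetric_measure \<nu>"
  shows "integrable \<nu> (\<lambda>x. indicator (top_region J) x * (x $ i * x $ j))"
proof -
  interpret prob_space \<nu> by (rule symmetric_measureD(1)[OF sym])
  show ?thesis
  proof (rule integrable_const_bound[where B=1])
    show "AE x in \<nu>. norm (indicator (top_region J) x * (x $ i * x $ j)) \<le> (1::real)"
    proof (rule AE_I2)
      fix x :: "real^'k"
      show "norm (indicator (top_region J) x * (x $ i * x $ j)) \<le> (1::real)"
      proof (cases "x \<in> top_region J")
        case True
        then have "\<bar>x $ i\<bar> \<le> 1" "\<bar>x $ j\<bar> \<le> 1"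
          using component_le_norm_cart[of x] by (auto simp: top_region_def)
        then have "\<bar>x $ i\<bar> * \<bar>x $ j\<bar> \<le> 1 * 1" by (intro mult_mono) auto
        then show ?thesis using True by (simp add: abs_mult)
      qed simp
    qed
    show "(\<lambda>x. indicator (top_region J) x * (x $ i * x $ j)) \<in> borel_measurable \<nu>"
      using borel_measurable_top_moment_integrand by (simp add: symmetric_measureD(4)[OF sym])
  qed
qed

text \<open>Flipping the sign of \<open>x\<^sub>i\<close> preserves \<open>\<nu>\<close> and the top regions but negates \<open>x\<^sub>i x\<^sub>j\<close>.\<close>

lemma top_moment_off_diagonal:
  fixes \<nu> :: "(real^'k) measure"
  assumes sym: "symmetric_measure \<nu>" and ij: "i \<noteq> j"
  shows "top_moment \<nu> J i j = 0"
proof -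
  define \<sigma> where "\<sigma> = (\<lambda>l. if l = i then (-1::real) else 1)"
  have \<sigma>: "\<sigma> \<in> signs" by (simp add: \<sigma>_def signs_def)
  let ?f = "\<lambda>x::real^'k. indicator (top_region J) x * (x $ i * x $ j)"
  have flip: "?f (\<chi> l. \<sigma> l * x $ id l) = - ?f x" for x
  proof -
    have "(\<chi> l. \<sigma> l * x $ id l) \<in> top_region J \<longleftrightarrow> x \<in> top_region J"
      by (rule top_region_abs_cong) (simp add: \<sigma>_def abs_mult)
    then show ?thesis using ij by (simp add: \<sigma>_def indicator_def)
  qed
  have "top_moment \<nu> J i j = integral\<^sup>L \<nu> (\<lambda>x. ?f (\<chi> l. \<sigma> l * x $ id l))"
    unfolding top_moment_def
    by (rule integral_symmetric_measure_invariant[OF sym \<sigma> bij_id borel_measurable_top_moment_integrand])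
  also have "\<dots> = - top_moment \<nu> J i j" unfolding flip top_moment_def by simp
  finally show ?thesis by simp
qed

lemma top_moment_diagonal_swap:
  fixes \<nu> :: "(real^'k) measure"
  assumes sym: "symmetric_measure \<nu>" and same_side: "a \<in> J \<longleftrightarrow> b \<in> J"
  shows "top_moment \<nu> J a a = top_moment \<nu> J b b"
proof -
  let ?t = "Transposition.transpose a b"
  let ?f = "\<lambda>x::real^'k. indicator (top_region J) x * (x $ a * x $ a)"
  have "(\<chi> l. x $ ?t l) \<in> top_region J \<longleftrightarrow> x \<in> top_region J" for x
    by (rule top_region_permute[OF bij_transpose]) (use same_side in \<open>auto simp: Transposition.transpose_def\<close>)
  then have swap: "?f (\<chi> l. 1 * x $ ?t l) = indicator (top_region J) x * (x $ b * x $ b)" for x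
    by (simp add: indicator_def)
  have "top_moment \<nu> J a a = integral\<^sup>L \<nu> (\<lambda>x. ?f (\<chi> l. 1 * x $ ?t l))"
    unfolding top_moment_def
    by (rule integral_symmetric_measure_invariant[OF sym _ bij_transpose borel_measurable_top_moment_integrand])
      (simp add: signs_def)
  also have "\<dots> = top_moment \<nu> J b b" unfolding swap top_moment_def ..
  finally show ?thesis .
qed

lemma top_moment_diagonal_nonneg: "0 \<le> top_moment \<nu> J a a"
  unfolding top_moment_def by (rule integral_nonneg_AE) (simp add: indicator_def)

lemma top_moment_diagonal_mono:
  fixes \<nu> :: "(real^'k) measure"
  assumes sym: "symmetric_measure \<nu>" and "a \<in> J" "b \<notin> J"
  shows "top_moment \<nu> J b b \<le> top_moment \<nu> J a a"
  unfolding top_moment_def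
proof (rule integral_mono[OF integrable_top_moment_integrand[OF sym] integrable_top_moment_integrand[OF sym]])
  fix x :: "real^'k"
  show "indicator (top_region J) x * (x $ b * x $ b) \<le> indicator (top_region J) x * (x $ a * x $ a)"
  proof (cases "x \<in> top_region J")
    case True
    then have "\<bar>x $ b\<bar> < \<bar>x $ a\<bar>" using assms by (simp add: top_region_def)
    then have "\<bar>x $ b\<bar> * \<bar>x $ b\<bar> \<le> \<bar>x $ a\<bar> * \<bar>x $ a\<bar>" by (intro mult_mono) auto
    then show ?thesis using True by (simp add: abs_mult[symmetric])
  qed simp
qed

lemma top_moment_diagonal_two_values:
  fixes \<nu> :: "(real^'k) measure"
  assumes sym: "symmetric_measure \<nu>" and "a \<in> J"
  obtains n m where "0 \<le> n" "n \<le> m" "\<And>i. top_moment \<nu> J i i = (if i \<in> J then m else n)"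
proof -
  let ?m = "top_moment \<nu> J a a"
  have in_J: "top_moment \<nu> J i i = ?m" if "i \<in> J" for i
    using top_moment_diagonal_swap[OF sym, of i J a] \<open>a \<in> J\<close> that by simp
  show ?thesis
  proof (cases "J = UNIV")
    case True
    show ?thesis by (rule that[of 0 ?m]) (use in_J True top_moment_diagonal_nonneg in auto)
  next
    case False
    then obtain b where b: "b \<notin> J" by blast
    have off_J: "top_moment \<nu> J i i = top_moment \<nu> J b b" if "i \<notin> J" for i
      using top_moment_diagonal_swap[OF sym, of i J b] b that by simp
    show ?thesis
      by (rule that[of "top_moment \<nu> J b b" ?m])
        (use in_J off_J top_moment_diagonal_nonneg top_moment_diagonal_mono[OF sym \<open>a \<in> J\<close> b] in auto)
  qed
qed

section \<open>The objective near \<open>\<Phi>\<close>\<close>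

lemma linear_P: "linear (P I Psi)"
  unfolding P_def[abs_def] by (rule linear_orth_proj) simp

lemma norm_sq_linear_synth:
  fixes L :: "real^'d \<Rightarrow> real^'d" and Phi :: "real^'d^'k"
  assumes "linear L"
  shows "(norm (L (synth Phi x)))\<^sup>2 =
    (\<Sum>i\<in>UNIV. \<Sum>j\<in>UNIV. (x $ i * x $ j) * inner (L (Phi $ i)) (L (Phi $ j)))"
proof -
  have "L (synth Phi x) = (\<Sum>i\<in>UNIV. x $ i *\<^sub>R L (Phi $ i))"
    unfolding synth_def using assms by (simp add: linear_sum linear_scale)
  then have "(norm (L (synth Phi x)))\<^sup>2 =
      inner (\<Sum>i\<in>UNIV. x $ i *\<^sub>R L (Phi $ i)) (\<Sum>j\<in>UNIV. x $ j *\<^sub>R L (Phi $ j))"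
    by (simp add: dot_square_norm)
  also have "\<dots> = (\<Sum>i\<in>UNIV. \<Sum>j\<in>UNIV. (x $ i * x $ j) * inner (L (Phi $ i)) (L (Phi $ j)))"
    unfolding inner_sum_left inner_sum_right by (intro sum.cong refl) (simp add: inner_commute mult.assoc)
  finally show ?thesis .
qed

lemma borel_measurable_Max_norm_P:
  fixes Phi Psi :: "real^'d^'k"
  shows "(\<lambda>x. Max {(norm (P I Psi (synth Phi x)))\<^sup>2 | I. card I \<le> S}) \<in> borel_measurable borel"
proof -
  have cont: "continuous_on UNIV (\<lambda>x. P I Psi (synth Phi x))" for I
    using linear_compose[OF linear_synth linear_P]
    by (intro linear_continuous_on linear_conv_bounded_linear[THEN iffD1]) (simp add: o_def)
  have "(\<lambda>x. (norm (P I Psi (synth Phi x)))\<^sup>2) \<in> borel_measurable borel" for I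
    by (rule borel_measurable_continuous_onI) (intro continuous_intros cont)
  then show ?thesis unfolding setcompr_eq_image by (intro borel_measurable_Max) auto
qed

text \<open>Almost surely \<open>x\<close> lies in exactly one top region, whose support attains the maximum.\<close>

definition top_objective :: "real^'d^'k \<Rightarrow> nat \<Rightarrow> real^'d^'k \<Rightarrow> real^'k \<Rightarrow> real" where
  "top_objective Phi S Psi x =
    (\<Sum>J\<in>{J. card J = S}. indicator (top_region J) x * (norm (P J Psi (synth Phi x)))\<^sup>2)"

lemma top_objective_eq:
  fixes Phi Psi :: "real^'d^'k"
  assumes J: "card J = S" "x \<in> top_region J"
  shows "top_objective Phi S Psi x = (norm (P J Psi (synth Phi x)))\<^sup>2"
proof -
  have ind: "(indicator (top_region J') x :: real) = (if J' = J then 1 else 0)" if "card J' = S" for J'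
  proof (cases "J' = J")
    case False
    have "card J' = card J" using that J(1) by simp
    then have "x \<notin> top_region J'" using top_region_unique[of J' J x] J(2) False by blast
    then show ?thesis using False by simp
  qed (use J in simp)
  have "top_objective Phi S Psi x =
      (\<Sum>J'\<in>{J. card J = S}. if J' = J then (norm (P J Psi (synth Phi x)))\<^sup>2 else 0)"
    unfolding top_objective_def
  proof (intro sum.cong refl)
    fix J' :: "'k set" assume "J' \<in> {J. card J = S}"
    then show "indicator (top_region J') x * (norm (P J' Psi (synth Phi x)))\<^sup>2 =
        (if J' = J then (norm (P J Psi (synth Phi x)))\<^sup>2 else 0)"
      using ind[of J'] by simp
  qed
  also have "\<dots> = (norm (P J Psi (synth Phi x)))\<^sup>2"
    using J(1) by (subst sum.delta[OF finite]) simp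
  finally show ?thesis .
qed

lemma top_objective_expand:
  "top_objective Phi S Psi x = (\<Sum>J\<in>{J. card J = S}. \<Sum>i\<in>UNIV. \<Sum>j\<in>UNIV.
      (indicator (top_region J) x * (x $ i * x $ j)) * inner (P J Psi (Phi $ i)) (P J Psi (Phi $ j)))"
  unfolding top_objective_def norm_sq_linear_synth[OF linear_P]
  by (simp add: sum_distrib_left mult.assoc)

lemma borel_measurable_top_objective: "top_objective Phi S Psi \<in> borel_measurable borel"
  unfolding top_objective_expand[abs_def]
  by (intro borel_measurable_sum borel_measurable_times borel_measurable_top_moment_integrand) simp

lemma integral_top_objective:
  fixes \<nu> :: "(real^'k) measure" and Phi Psi :: "real^'d^'k"
  assumes sym: "symmetric_measure \<nu>"
  shows "integral\<^sup>L \<nu> (top_objective Phi S Psi) =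
    (\<Sum>J\<in>{J. card J = S}. \<Sum>i\<in>UNIV. top_moment \<nu> J i i * (norm (P J Psi (Phi $ i)))\<^sup>2)"
proof -
  have "integral\<^sup>L \<nu> (top_objective Phi S Psi) = (\<Sum>J\<in>{J. card J = S}. \<Sum>i\<in>UNIV. \<Sum>j\<in>UNIV.
      top_moment \<nu> J i j * inner (P J Psi (Phi $ i)) (P J Psi (Phi $ j)))"
    unfolding top_objective_expand[abs_def] top_moment_def
    using integrable_top_moment_integrand[OF sym]
    by (simp add: Bochner_Integration.integral_sum Bochner_Integration.integrable_sum integrable_mult_left)
  also have "\<dots> = (\<Sum>J\<in>{J. card J = S}. \<Sum>i\<in>UNIV. top_moment \<nu> J i i * (norm (P J Psi (Phi $ i)))\<^sup>2)"
  proof (intro sum.cong refl)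
    fix J i
    have "(\<Sum>j\<in>UNIV. top_moment \<nu> J i j * inner (P J Psi (Phi $ i)) (P J Psi (Phi $ j)))
        = (\<Sum>j\<in>UNIV. if j = i then top_moment \<nu> J i i * inner (P J Psi (Phi $ i)) (P J Psi (Phi $ i)) else 0)"
      by (intro sum.cong refl) (auto simp: top_moment_off_diagonal[OF sym])
    then show "(\<Sum>j\<in>UNIV. top_moment \<nu> J i j * inner (P J Psi (Phi $ i)) (P J Psi (Phi $ j)))
        = top_moment \<nu> J i i * (norm (P J Psi (Phi $ i)))\<^sup>2"
      by (simp add: dot_square_norm)
  qed
  finally show ?thesis .
qed

lemma objective_eq_top_moment_sum:
  fixes \<nu> :: "(real^'k) measure" and Phi Psi :: "real^'d^'k"
  assumes sym: "symmetric_measure \<nu>" and \<kappa>: "\<kappa> > 0" and SK: "S \<le> CARD('k)"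
    and margin: "AE x in \<nu>. has_margin Phi S \<kappa> x"
    and stable: "\<And>x J. norm x = 1 \<Longrightarrow> card J \<le> S \<Longrightarrow> support_wins Phi S \<kappa> x J \<Longrightarrow>
      Max {(norm (P I Psi (synth Phi x)))\<^sup>2 | I. card I \<le> S} = (norm (P J Psi (synth Phi x)))\<^sup>2"
  shows "objective \<nu> Phi S Psi =
    (\<Sum>J\<in>{J. card J = S}. \<Sum>i\<in>UNIV. top_moment \<nu> J i i * (norm (P J Psi (Phi $ i)))\<^sup>2)"
proof -
  have "AE x in \<nu>. Max {(norm (P I Psi (synth Phi x)))\<^sup>2 | I. card I \<le> S} = top_objective Phi S Psi x"
    using margin AE_symmetric_measure_norm_1[OF sym]
  proof eventually_elim
    case (elim x)
    then obtain J where J: "card J = S" "x \<in> top_region J" and wins: "support_wins Phi S \<kappa> x J"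
      using has_margin_top_region[OF _ \<kappa> SK] by metis
    have "top_objective Phi S Psi x = (norm (P J Psi (synth Phi x)))\<^sup>2" by (rule top_objective_eq[OF J])
    with stable[OF elim(2) _ wins] J(1) show ?case by simp
  qed
  then have "objective \<nu> Phi S Psi = integral\<^sup>L \<nu> (top_objective Phi S Psi)"
    unfolding objective_def
    by (intro integral_cong_AE)
      (simp_all add: symmetric_measureD(4)[OF sym] borel_measurable_Max_norm_P borel_measurable_top_objective)
  then show ?thesis by (simp add: integral_top_objective[OF sym])
qed

lemma sum_norm_P_tight_frame_le:
  fixes Phi Psi :: "real^'d^'k"
  assumes T: "unit_norm_tight_frame Phi" and indep: "atoms_independent Phi J"
  shows "(\<Sum>i\<in>UNIV. (norm (P J Psi (Phi $ i)))\<^sup>2) \<le> (\<Sum>i\<in>UNIV. (norm (P J Phi (Phi $ i)))\<^sup>2)"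
proof -
  have "(\<Sum>i\<in>UNIV. (norm (P J Psi (Phi $ i)))\<^sup>2) =
      real CARD('k) / real CARD('d) * dim (span ((\<lambda>i. Psi $ i) ` J))"
    unfolding P_def by (rule sum_norm_orth_proj_tight_frame[OF T]) simp
  also have "\<dots> \<le> real CARD('k) / real CARD('d) * card J"
    using dim_span_atoms_le[of Psi J] by (intro mult_left_mono) auto
  also have "\<dots> = (\<Sum>i\<in>UNIV. (norm (P J Phi (Phi $ i)))\<^sup>2)"
    unfolding P_def dim_span_atoms_eq[OF indep, symmetric]
    by (rule sum_norm_orth_proj_tight_frame[OF T, symmetric]) simp
  finally show ?thesis .
qed

lemma weighted_sum_two_values_le:
  fixes h h' :: "'k::finite \<Rightarrow> real"
  assumes "0 \<le> n" "n \<le> m" "sum h UNIV \<le> sum h' UNIV" "\<And>i. i \<in> J \<Longrightarrow> h i \<le> h' i"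
  shows "(\<Sum>i\<in>UNIV. (if i \<in> J then m else n) * h i) \<le> (\<Sum>i\<in>UNIV. (if i \<in> J then m else n) * h' i)"
proof -
  have split: "(\<Sum>i\<in>UNIV. (if i \<in> J then m else n) * g i) = n * sum g UNIV + (m - n) * sum g J"
    for g :: "'k \<Rightarrow> real"
  proof -
    have "(\<Sum>i\<in>UNIV. (if i \<in> J then m else n) * g i) =
        (\<Sum>i\<in>UNIV. n * g i + (m - n) * (if i \<in> J then g i else 0))"
      by (intro sum.cong) (auto simp: algebra_simps)
    also have "\<dots> = n * sum g UNIV + (m - n) * (\<Sum>i\<in>UNIV. if i \<in> J then g i else 0)"
      by (simp add: sum.distrib sum_distrib_left)
    also have "(\<Sum>i\<in>UNIV. if i \<in> J then g i else 0) = sum g J"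
      by (simp add: sum.If_cases)
    finally show ?thesis .
  qed
  have "n * sum h UNIV \<le> n * sum h' UNIV" using assms(1,3) by (rule mult_left_mono[rotated])
  moreover have "(m - n) * sum h J \<le> (m - n) * sum h' J"
    using assms(2,4) by (intro mult_left_mono sum_mono) auto
  ultimately show ?thesis unfolding split by linarith
qed

text \<open>On \<open>J\<close> the dictionary \<open>\<Phi>\<close> wins term by term, since \<open>P\<^sub>J(\<Phi>)\<close> fixes the atoms of \<open>J\<close>.\<close>

lemma top_moment_sum_le:
  fixes \<nu> :: "(real^'k) measure" and Phi Psi :: "real^'d^'k"
  assumes T: "unit_norm_tight_frame Phi" and sym: "symmetric_measure \<nu>"
    and J: "J \<noteq> {}" and indep: "atoms_independent Phi J"
  shows "(\<Sum>i\<in>UNIV. top_moment \<nu> J i i * (norm (P J Psi (Phi $ i)))\<^sup>2)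
    \<le> (\<Sum>i\<in>UNIV. top_moment \<nu> J i i * (norm (P J Phi (Phi $ i)))\<^sup>2)"
proof -
  have unit: "norm (Phi $ i) = 1" for i using T by (simp add: unit_norm_tight_frame_def)
  obtain a where "a \<in> J" using J by blast
  then obtain n m where nm: "0 \<le> n" "n \<le> m" "\<And>i. top_moment \<nu> J i i = (if i \<in> J then m else n)"
    using top_moment_diagonal_two_values[OF sym] by blast
  have "(norm (P J Psi (Phi $ i)))\<^sup>2 \<le> (norm (P J Phi (Phi $ i)))\<^sup>2" if "i \<in> J" for i
  proof -
    have "P J Phi (Phi $ i) = Phi $ i"
      unfolding P_def by (rule orth_proj_id) (use that in \<open>auto intro: span_base\<close>)
    moreover have "norm (P J Psi (Phi $ i)) \<le> norm (Phi $ i)"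
      unfolding P_def by (rule norm_orth_proj_le) simp
    ultimately show ?thesis using unit[of i] by (simp add: power_le_one)
  qed
  then show ?thesis unfolding nm(3)
    by (intro weighted_sum_two_values_le[OF nm(1,2) sum_norm_P_tight_frame_le[OF T indep]])
qed

theorem theorem6:
  fixes Phi :: "real^'d^'k" and \<nu> :: "(real^'k) measure"
    and \<mu> \<kappa> :: real and S :: nat
  assumes "unit_norm_tight_frame Phi"
    and "\<mu> = coherence Phi"
    and "1 \<le> S" and "S \<le> CARD('k)"
    and "symmetric_measure \<nu>"
    and "\<kappa> > 0"
    and "measure \<nu> {x \<in> space \<nu>.
           Min ((\<lambda>(p, \<sigma>).
               norm (P {i. p i < S} Phi (synth Phi (cps p \<sigma> x)))
             - Max ((\<lambda>I. norm (P I Phi (synth Phi (cps p \<sigma> x))))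
                      ` {I. card I \<le> S \<and> I \<noteq> {i. p i < S}}))
             ` (perms \<times> signs)) \<ge> 2 * \<kappa>} = 1"
  shows "local_max_on dictionaries (objective \<nu> Phi S) Phi"
proof -
  note T = assms(1) and SK = assms(4) and sym = assms(5) and \<kappa> = assms(6)
  have unit: "\<And>i. norm (Phi $ i) = 1" using T by (simp add: unit_norm_tight_frame_def)
  from prob_space.AE_prob_1[OF symmetric_measureD(1)[OF sym] assms(7)]
  have margin: "AE x in \<nu>. has_margin Phi S \<kappa> x"
    by eventually_elim (auto intro: has_margin_if_Min_ge)
  then obtain x0 where "has_margin Phi S \<kappa> x0"
    using eventually_happens'[OF prob_space.ae_filter_bot[OF symmetric_measureD(1)[OF sym]]] by blast
  then have indep: "\<And>I. card I \<le> S \<Longrightarrow> atoms_independent Phi I"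
    by (rule has_margin_atoms_independent[OF _ \<kappa> SK])
  obtain \<epsilon> where \<epsilon>: "\<epsilon> > 0" and stable: "\<And>Psi x J. dist Psi Phi < \<epsilon> \<Longrightarrow> norm x = 1 \<Longrightarrow>
      card J \<le> S \<Longrightarrow> support_wins Phi S \<kappa> x J \<Longrightarrow>
      Max {(norm (P I Psi (synth Phi x)))\<^sup>2 | I. card I \<le> S} = (norm (P J Psi (synth Phi x)))\<^sup>2"
    using Max_norm_P_stable[OF indep \<kappa> unit] by blast
  let ?value = "\<lambda>Psi. \<Sum>J\<in>{J. card J = S}. \<Sum>i\<in>UNIV. top_moment \<nu> J i i * (norm (P J Psi (Phi $ i)))\<^sup>2"
  have near: "objective \<nu> Phi S Psi = ?value Psi" if "dist Psi Phi < \<epsilon>" for Psi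
    by (rule objective_eq_top_moment_sum[OF sym \<kappa> SK margin stable[OF that]])
  have "?value Psi \<le> ?value Phi" for Psi
    using assms(3) indep by (intro sum_mono top_moment_sum_le[OF T sym]) auto
  then show ?thesis
    unfolding local_max_on_def dictionaries_def using unit \<epsilon> near[of Phi] near by auto
qed

end
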